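(* Let $G$ be a connected weighted multigraph on the vertex set $V$, $|V|=n\ge2$, with positive edge weights, weighted adjacency matrix $A$, spectral radius $\rho$ and Perron vector $p$. Let $d^{LW}(i,j)=\lim_{\alpha\to\infty}d^{W}_\alpha(i,j)$ be the long walk distance. Then for all distinct $i,j\in V$, $$d^{LW}(i,j)=n^{-1}\Bigl[(\rho I-B_{jj})^{-1}_i+(\rho I-B_{ii})^{-1}_j\Bigr]\mathbf 1,$$ where $B=P^{-1}AP$, $P=\operatorname{diag}p$, and $\mathbf 1$ is the vector of $n-1$ ones.
   Context: $A=(a_{ij})$ has $a_{ij}$ equal to the sum of weights of the edges joining $i$ and $j$ (loops, multiple edges allowed). The Perron vector $p$ is the positive eigenvector of $A$ for $\rho$ with entries summing to 1. For $\alpha>0$, $t=(\rho+\alpha^{-1})^{-1}$, $R_t=(I-tA)^{-1}=(r_{ij}(t))$, and $d^{W}_\alpha(i,j)=\theta\bigl(\tfrac12(\ln r_{ii}(t)+\ln r_{jj}(t))-\ln r_{ij}(t)\bigr)$ with $\theta=\ln(e+\alpha^{2/n})\frac{\alpha-1}{\ln\alpha}$ ($\theta=\ln(e+1)$ at $\alpha=1$); the limit defining $d^{LW}$ exists. Matrices are indexed by vertices; $M_{jj}$ is $M$ with row and column $j$ deleted; $N^{-1}_i$ is the row of $N^{-1}$ indexed by $i$. *)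

theory Defs
  imports "Jordan_Normal_Form.Spectral_Radius" "Jordan_Normal_Form.Gauss_Jordan_Elimination"
begin

text \<open>A weighted multigraph on the vertex set V = {0..<n}: a finite set E of edges,
  each edge e has a set of endpoints ends e (one vertex for a loop, two otherwise)
  and a weight w e.\<close>

definition wmultigraph :: "nat \<Rightarrow> 'e set \<Rightarrow> ('e \<Rightarrow> nat set) \<Rightarrow> ('e \<Rightarrow> real) \<Rightarrow> bool" where
  "wmultigraph n E ends w \<longleftrightarrow> finite E \<and>
     (\<forall>e\<in>E. ends e \<subseteq> {0..<n} \<and> 1 \<le> card (ends e) \<and> card (ends e) \<le> 2 \<and> w e > 0)"

definition adjacent :: "'e set \<Rightarrow> ('e \<Rightarrow> nat set) \<Rightarrow> (nat \<times> nat) set" where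
  "adjacent E ends = {(u, v). \<exists>e\<in>E. ends e = {u, v}}"

definition connected_graph :: "nat \<Rightarrow> 'e set \<Rightarrow> ('e \<Rightarrow> nat set) \<Rightarrow> bool" where
  "connected_graph n E ends \<longleftrightarrow> (\<forall>i<n. \<forall>j<n. (i, j) \<in> (adjacent E ends)\<^sup>*)"

definition wadj :: "nat \<Rightarrow> 'e set \<Rightarrow> ('e \<Rightarrow> nat set) \<Rightarrow> ('e \<Rightarrow> real) \<Rightarrow> real mat" where
  "wadj n E ends w = mat n n (\<lambda>(i, j). \<Sum>e\<in>{e\<in>E. ends e = {i, j}}. w e)"

definition rho :: "real mat \<Rightarrow> real" where
  "rho A = spectral_radius (map_mat complex_of_real A)"

definition perron_vec :: "real mat \<Rightarrow> real vec" where
  "perron_vec A = (THE p. p \<in> carrier_vec (dim_row A) \<and> (\<forall>i<dim_row A. p $ i > 0) \<and>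
      A *\<^sub>v p = rho A \<cdot>\<^sub>v p \<and> (\<Sum>i<dim_row A. p $ i) = 1)"

definition minv :: "real mat \<Rightarrow> real mat" where
  "minv M = the (mat_inverse M)"

definition theta :: "nat \<Rightarrow> real \<Rightarrow> real" where
  "theta n \<alpha> = (if \<alpha> = 1 then ln (exp 1 + 1)
     else ln (exp 1 + \<alpha> powr (2 / real n)) * (\<alpha> - 1) / ln \<alpha>)"

definition resolvent :: "real mat \<Rightarrow> real \<Rightarrow> real mat" where
  "resolvent A \<alpha> = (let t = 1 / (rho A + 1 / \<alpha>) in minv (1\<^sub>m (dim_row A) - t \<cdot>\<^sub>m A))"

definition dW :: "real mat \<Rightarrow> real \<Rightarrow> nat \<Rightarrow> nat \<Rightarrow> real" where
  "dW A \<alpha> i j = (let R = resolvent A \<alpha> in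
     theta (dim_row A) \<alpha> * ((ln (R $$ (i, i)) + ln (R $$ (j, j))) / 2 - ln (R $$ (i, j))))"

definition diag_of_vec :: "real vec \<Rightarrow> real mat" where
  "diag_of_vec p = mat (dim_vec p) (dim_vec p) (\<lambda>(i, j). if i = j then p $ i else 0)"

text \<open>Row of the inverse of (rho I - B) with row/column j deleted, indexed by vertex i
  (i \<noteq> j; after deletion vertex i has index delete_index j i), times the all-ones vector.\<close>
definition row_inv_del_sum :: "real mat \<Rightarrow> real \<Rightarrow> nat \<Rightarrow> nat \<Rightarrow> real" where
  "row_inv_del_sum B r j i =
     (let M = minv (mat_delete (r \<cdot>\<^sub>m 1\<^sub>m (dim_row B) - B) j j)
      in \<Sum>k<dim_row B - 1. M $$ (delete_index j i, k))"

end

theory Submission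
  imports Defs "HOL-Analysis.Function_Topology" "HOL-Real_Asymp.Real_Asymp"
begin

text \<open>Write \<open>s = 1/\<alpha>\<close>, so that \<open>R = (I - A/(\<rho> + s))\<^sup>-\<^sup>1\<close>, and let \<open>B = P\<^sup>-\<^sup>1 A P\<close>, whose row
  sums are all \<open>\<rho>\<close>. Let \<open>u\<^sub>j(s)\<close> solve \<open>((\<rho> + s) I - B\<^sub>j\<^sub>j) u = 1\<close> on \<open>V - {j}\<close>, extended by
  \<open>u\<^sub>j(s)\<^sub>j = 0\<close>. Then column \<open>j\<close> of \<open>R\<close> is \<open>c\<^sub>j(s) p\<^sub>i (1 - s u\<^sub>j(s)\<^sub>i)\<close>; comparing it with the
  diagonal and using \<open>R\<^sub>i\<^sub>j = R\<^sub>j\<^sub>i\<close>, all scale factors cancel from the bracket in \<open>d\<^sup>W\<close>, which becomes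
  \<open>-(ln (1 - s u\<^sub>j(s)\<^sub>i) + ln (1 - s u\<^sub>i(s)\<^sub>j)) / 2 \<approx> s (u\<^sub>j(s)\<^sub>i + u\<^sub>i(s)\<^sub>j) / 2\<close>. As
  \<open>\<theta> \<sim> 2\<alpha>/n\<close>, the limit is \<open>(u\<^sub>j(0)\<^sub>i + u\<^sub>i(0)\<^sub>j) / n\<close>, and \<open>u\<^sub>j(0) = (\<rho> I - B\<^sub>j\<^sub>j)\<^sup>-\<^sup>1 1\<close>.
  Invertibility, positivity and the continuity \<open>u\<^sub>j(s) \<rightarrow> u\<^sub>j(0)\<close> all come from a minimum principle
  for \<open>(\<rho> + s) I - B\<^sub>j\<^sub>j\<close>, which holds because the graph is connected. The Perron vector of the
  symmetric matrix \<open>A\<close> is obtained by maximising its quadratic form on the unit sphere.\<close>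

lemma mult_mat_vec_index_sum:
  assumes "A \<in> carrier_mat nr nc" "v \<in> carrier_vec nc" "i < nr"
  shows "(A *\<^sub>v v) $ i = (\<Sum>l<nc. A $$ (i, l) * v $ l)"
  using assms by (auto simp: scalar_prod_def atLeast0LessThan intro!: sum.cong)

lemma mult_mat_index_sum:
  assumes "X \<in> carrier_mat n m" "Y \<in> carrier_mat m q" "k < n" "l < q"
  shows "(X * Y) $$ (k, l) = (\<Sum>r<m. X $$ (k, r) * Y $$ (r, l))"
  using assms by (auto simp: scalar_prod_def atLeast0LessThan intro!: sum.cong)

lemma nonzero_vec_index:
  assumes "v \<in> carrier_vec n" and "v \<noteq> 0\<^sub>v n"
  obtains k where "k < n" and "v $ k \<noteq> 0"
  using assms by (metis carrier_vecD eq_vecI index_zero_vec)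

lemma minv_if_trivial_kernel:
  fixes M :: "real mat"
  assumes M: "M \<in> carrier_mat m m"
    and ker: "\<And>v. v \<in> carrier_vec m \<Longrightarrow> M *\<^sub>v v = 0\<^sub>v m \<Longrightarrow> v = 0\<^sub>v m"
  shows "M * minv M = 1\<^sub>m m \<and> minv M * M = 1\<^sub>m m \<and> minv M \<in> carrier_mat m m"
proof -
  have "det M \<noteq> 0" using det_0_iff_vec_prod_zero_field[OF M] ker by auto
  hence "M \<in> Units (ring_mat TYPE(real) m undefined)" by (rule det_non_zero_imp_unit[OF M])
  hence "mat_inverse M \<noteq> None" using mat_inverse(1)[OF M, of undefined] by blast
  then obtain B where B: "mat_inverse M = Some B" by auto
  show ?thesis using mat_inverse(2)[OF M B] B unfolding minv_def by simp
qed

lemma minv_eq_right_inverse: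
  fixes M N :: "real mat"
  assumes M: "M \<in> carrier_mat m m" and N: "N \<in> carrier_mat m m" and MN: "M * N = 1\<^sub>m m"
  shows "minv M = N"
proof -
  have NM: "N * M = 1\<^sub>m m" by (rule mat_mult_left_right_inverse[OF M N MN])
  have "M * minv M = 1\<^sub>m m \<and> minv M * M = 1\<^sub>m m \<and> minv M \<in> carrier_mat m m"
  proof (rule minv_if_trivial_kernel[OF M])
    fix v :: "real Matrix.vec" assume v: "v \<in> carrier_vec m" and Mv: "M *\<^sub>v v = 0\<^sub>v m"
    have "v = (N * M) *\<^sub>v v" using NM v by simp
    also have "\<dots> = N *\<^sub>v (M *\<^sub>v v)" by (rule assoc_mult_mat_vec[OF N M v])
    finally show "v = 0\<^sub>v m" unfolding Mv using N by (auto intro!: eq_vecI simp: scalar_prod_def)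
  qed
  hence inv: "minv M * M = 1\<^sub>m m" "minv M \<in> carrier_mat m m" by auto
  have "minv M = minv M * (M * N)" using inv(2) by (simp add: MN)
  also have "\<dots> = (minv M * M) * N" using inv(2) M N by (simp add: assoc_mult_mat)
  also have "\<dots> = N" using inv(1) N by simp
  finally show ?thesis .
qed

lemma minv_symmetric:
  fixes M :: "real mat"
  assumes M: "M \<in> carrier_mat m m" and sym: "transpose_mat M = M"
    and inv: "M * minv M = 1\<^sub>m m" "minv M \<in> carrier_mat m m"
  shows "transpose_mat (minv M) = minv M"
proof -
  have Mt: "transpose_mat (minv M) \<in> carrier_mat m m" using inv(2) by simp
  have "transpose_mat (minv M) * M = 1\<^sub>m m"
    using transpose_mult[OF M inv(2)] sym inv(1) by simp
  hence "M * transpose_mat (minv M) = 1\<^sub>m m" by (rule mat_mult_left_right_inverse[OF Mt M])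
  thus ?thesis using minv_eq_right_inverse[OF M Mt] by simp
qed

lemma insert_index_less: "j < n \<Longrightarrow> x < n - 1 \<Longrightarrow> insert_index j x < n"
  unfolding insert_index_def by auto

lemma delete_index_less: "j < n \<Longrightarrow> l < n \<Longrightarrow> l \<noteq> j \<Longrightarrow> delete_index j l < n - 1"
  unfolding delete_index_def by auto

lemma sum_insert_index:
  assumes "j < n"
  shows "(\<Sum>l\<in>{l. l < n \<and> l \<noteq> j}. g l) = (\<Sum>x<n-1. g (insert_index j x))"
proof -
  have "insert_index j ` {0..<n-1} = {0..<Suc (n-1)} - {j}"
    by (rule insert_index_image) (use assms in simp)
  hence "insert_index j ` {..<n-1} = {l. l < n \<and> l \<noteq> j}"
    using assms by (auto simp: atLeast0LessThan)
  thus ?thesis using sum.reindex[OF insert_index_inj_on[of j "{..<n-1}"], of g] by simp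
qed

section \<open>Maximising a quadratic form\<close>

definition qform :: "nat \<Rightarrow> (nat \<Rightarrow> nat \<Rightarrow> real) \<Rightarrow> (nat \<Rightarrow> real) \<Rightarrow> real" where
  "qform n a y = (\<Sum>k<n. \<Sum>l<n. y k * a k l * y l)"

definition sqnorm :: "nat \<Rightarrow> (nat \<Rightarrow> real) \<Rightarrow> real" where
  "sqnorm n y = (\<Sum>k<n. (y k)\<^sup>2)"

lemma sqnorm_eq_0_imp: "sqnorm n y = 0 \<Longrightarrow> k < n \<Longrightarrow> y k = 0"
  unfolding sqnorm_def by (subst (asm) sum_nonneg_eq_0_iff) auto

lemma qform_scale: "qform n a (\<lambda>k. c * y k) = c\<^sup>2 * qform n a y"
  unfolding qform_def by (simp add: sum_distrib_left power2_eq_square mult_ac)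

lemma sqnorm_scale: "sqnorm n (\<lambda>k. c * y k) = c\<^sup>2 * sqnorm n y"
  unfolding sqnorm_def by (simp add: power_mult_distrib sum_distrib_left)

lemma qform_perturb:
  assumes sym: "\<And>k l. a k l = a l k"
  shows "qform n a (\<lambda>k. z k + e * h k)
    = qform n a z + 2 * e * (\<Sum>k<n. h k * (\<Sum>l<n. a k l * z l)) + e\<^sup>2 * qform n a h"
proof -
  have swap: "(\<Sum>k<n. \<Sum>l<n. z k * a k l * h l) = (\<Sum>k<n. h k * (\<Sum>l<n. a k l * z l))"
    by (subst sum.swap) (simp add: sum_distrib_left sym mult_ac)
  have "qform n a (\<lambda>k. z k + e * h k) = (\<Sum>k<n. \<Sum>l<n. z k * a k l * z l + e * (z k * a k l * h l)
      + e * (h k * a k l * z l) + e\<^sup>2 * (h k * a k l * h l))"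
    unfolding qform_def by (intro sum.cong refl) (simp add: algebra_simps power2_eq_square)
  also have "\<dots> = qform n a z + e * (\<Sum>k<n. \<Sum>l<n. z k * a k l * h l)
      + e * (\<Sum>k<n. \<Sum>l<n. h k * a k l * z l) + e\<^sup>2 * qform n a h"
    unfolding qform_def by (simp add: sum.distrib sum_distrib_left)
  also have "(\<Sum>k<n. \<Sum>l<n. h k * a k l * z l) = (\<Sum>k<n. h k * (\<Sum>l<n. a k l * z l))"
    by (simp add: sum_distrib_left mult_ac)
  finally show ?thesis using swap by simp
qed

lemma sqnorm_perturb:
  "sqnorm n (\<lambda>k. z k + e * h k) = sqnorm n z + 2 * e * (\<Sum>k<n. h k * z k) + e\<^sup>2 * sqnorm n h"
  unfolding sqnorm_def by (simp add: sum.distrib sum_distrib_left power2_eq_square algebra_simps)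

lemma qform_max_on_sphere:
  assumes n: "n > 0"
  shows "\<exists>x. sqnorm n x = 1 \<and> (\<forall>y. sqnorm n y = 1 \<longrightarrow> qform n a y \<le> qform n a x)"
proof -
  define K where "K = PiE UNIV (\<lambda>i. if i < n then {-1..1::real} else {0}) \<inter> {x. sqnorm n x = 1}"
  have "compactin (product_topology (\<lambda>i. euclidean) UNIV)
      (PiE UNIV (\<lambda>i. if i < n then {-1..1::real} else {0}))"
    unfolding compactin_PiE by auto
  moreover have "closed {x::nat\<Rightarrow>real. sqnorm n x = 1}"
    unfolding sqnorm_def by (intro closed_Collect_eq continuous_intros) auto
  ultimately have "compact K"
    unfolding K_def by (simp add: euclidean_product_topology compact_Int_closed)
  moreover have "(\<lambda>i. if i = 0 then 1 else 0) \<in> K"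
    using n by (auto simp: K_def sqnorm_def power2_eq_square if_distrib cong: if_cong)
  moreover have "continuous_on K (qform n a)"
    unfolding qform_def
    by (intro continuous_intros continuous_on_subset[OF continuous_on_product_coordinates]) auto
  ultimately obtain x where x: "x \<in> K" "\<And>y. y \<in> K \<Longrightarrow> qform n a y \<le> qform n a x"
    using continuous_attains_sup[of K "qform n a"] by blast
  have "qform n a y \<le> qform n a x" if y: "sqnorm n y = 1" for y
  proof -
    define y' where "y' = (\<lambda>i. if i < n then y i else 0)"
    have "(y i)\<^sup>2 \<le> 1" if "i < n" for i
      using member_le_sum[of i "{..<n}" "\<lambda>k. (y k)\<^sup>2"] that y by (auto simp: sqnorm_def)
    hence "\<bar>y i\<bar> \<le> 1" if "i < n" for i using that abs_le_square_iff[of "y i" 1] by auto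
    hence "y' \<in> K" using y by (force simp: K_def y'_def abs_le_iff sqnorm_def)
    moreover have "qform n a y' = qform n a y" unfolding qform_def y'_def by simp
    ultimately show ?thesis using x(2) by metis
  qed
  thus ?thesis using x(1) unfolding K_def by blast
qed

lemma qform_le_max_sqnorm:
  assumes "n > 0"
  obtains x where "sqnorm n x = 1" and "\<And>y. qform n a y \<le> qform n a x * sqnorm n y"
proof -
  obtain x where x1: "sqnorm n x = 1" and xmax: "\<And>y. sqnorm n y = 1 \<Longrightarrow> qform n a y \<le> qform n a x"
    using qform_max_on_sphere[OF assms] by blast
  have "qform n a y \<le> qform n a x * sqnorm n y" for y
  proof (cases "sqnorm n y = 0")
    case True
    hence "qform n a y = 0" unfolding qform_def using sqnorm_eq_0_imp by simp
    thus ?thesis using True by simp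
  next
    case False
    hence pos: "sqnorm n y > 0" unfolding sqnorm_def by (metis sum_nonneg zero_le_power2 order_le_less)
    define c where "c = 1 / sqrt (sqnorm n y)"
    have c2: "c\<^sup>2 * sqnorm n y = 1" "c\<^sup>2 > 0" unfolding c_def using pos by (simp_all add: power_divide)
    hence "c\<^sup>2 * qform n a y \<le> qform n a x * (c\<^sup>2 * sqnorm n y)"
      using xmax[of "\<lambda>k. c * y k"] by (simp add: qform_scale sqnorm_scale)
    thus ?thesis using c2(2) by (simp add: mult.left_commute mult_le_cancel_left_pos)
  qed
  thus ?thesis using x1 that by blast
qed

lemma rayleigh_maximizer_eigenvector:
  assumes sym: "\<And>k l. a k l = a l k"
    and bound: "\<And>y. qform n a y \<le> lam * sqnorm n y"
    and eq: "qform n a z = lam * sqnorm n z"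
    and k: "k < n"
  shows "(\<Sum>l<n. a k l * z l) = lam * z k"
proof -
  define h where "h = (\<lambda>k. (\<Sum>l<n. a k l * z l) - lam * z k)"
  define D where "D = lam * sqnorm n h - qform n a h"
  have hz: "(\<Sum>k<n. h k * (\<Sum>l<n. a k l * z l)) - lam * (\<Sum>k<n. h k * z k) = sqnorm n h"
    unfolding sqnorm_def h_def by (simp add: power2_eq_square sum_distrib_left sum_subtractf algebra_simps)
  have small: "2 * sqnorm n h \<le> e * D" if e: "e > 0" for e
  proof -
    have "qform n a (\<lambda>k. z k + e * h k) \<le> lam * sqnorm n (\<lambda>k. z k + e * h k)" by (rule bound)
    hence "e * (2 * sqnorm n h) \<le> e * (e * D)"
      unfolding qform_perturb[OF sym] sqnorm_perturb D_def hz[symmetric] eq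
      by (simp add: algebra_simps power2_eq_square)
    thus ?thesis using e by (simp add: mult_le_cancel_left_pos)
  qed
  have "2 * sqnorm n h \<le> 0"
  proof (rule field_le_epsilon)
    fix \<epsilon> :: real assume \<epsilon>: "\<epsilon> > 0"
    define e where "e = \<epsilon> / (\<bar>D\<bar> + 1)"
    have e: "e > 0" unfolding e_def using \<epsilon> by simp
    have "e * D \<le> e * (\<bar>D\<bar> + 1)" using e by (intro mult_left_mono) auto
    also have "\<dots> = \<epsilon>" unfolding e_def by simp
    finally show "2 * sqnorm n h \<le> 0 + \<epsilon>" using small[OF e] by simp
  qed
  moreover have "sqnorm n h \<ge> 0" unfolding sqnorm_def by (simp add: sum_nonneg)
  ultimately have "h k = 0" using sqnorm_eq_0_imp[OF _ k] by simp
  thus ?thesis unfolding h_def by simp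
qed

section \<open>The Perron vector of a symmetric irreducible matrix\<close>

locale sym_irreducible =
  fixes n :: nat and a :: "nat \<Rightarrow> nat \<Rightarrow> real"
  assumes n_ge_2: "n \<ge> 2"
    and sym: "\<And>k l. a k l = a l k"
    and nonneg: "\<And>k l. a k l \<ge> 0"
    and irreducible: "\<And>Z. Z \<subseteq> {..<n} \<Longrightarrow> Z \<noteq> {} \<Longrightarrow>
        (\<And>k l. k \<in> Z \<Longrightarrow> l < n \<Longrightarrow> a k l > 0 \<Longrightarrow> l \<in> Z) \<Longrightarrow> Z = {..<n}"
begin

lemma nonneg_eigenvector_vanishes:
  assumes v_nonneg: "\<And>k. k < n \<Longrightarrow> v k \<ge> 0"
    and ev: "\<And>k. k < n \<Longrightarrow> (\<Sum>l<n. a k l * v l) = \<mu> * v k"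
    and zero: "k0 < n" "v k0 = 0" and k: "k < n"
  shows "v k = 0"
proof -
  define Z where "Z = {k. k < n \<and> v k = 0}"
  have "Z = {..<n}"
  proof (rule irreducible)
    show "Z \<subseteq> {..<n}" "Z \<noteq> {}" using zero unfolding Z_def by auto
    fix x y assume x: "x \<in> Z" and y: "y < n" and axy: "a x y > 0"
    have "(\<Sum>l<n. a x l * v l) = 0" using ev[of x] x unfolding Z_def by auto
    moreover have "\<forall>l\<in>{..<n}. 0 \<le> a x l * v l" using v_nonneg nonneg by auto
    ultimately have "a x y * v y = 0" using sum_nonneg_eq_0_iff[of "{..<n}" "\<lambda>l. a x l * v l"] y by auto
    thus "y \<in> Z" using axy y unfolding Z_def by auto
  qed
  thus ?thesis using k unfolding Z_def by auto
qed

lemma exists_positive_eigenvector: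
  "\<exists>q lam. (\<forall>k<n. q k > 0) \<and> (\<forall>k<n. (\<Sum>l<n. a k l * q l) = lam * q k)"
proof -
  obtain x where x1: "sqnorm n x = 1" and bound: "\<And>y. qform n a y \<le> qform n a x * sqnorm n y"
    using qform_le_max_sqnorm[of n a] n_ge_2 by auto
  define lam where "lam = qform n a x"
  define z where "z = (\<lambda>k. \<bar>x k\<bar>)"
  have z1: "sqnorm n z = 1" using x1 unfolding sqnorm_def z_def by simp
  have "x k * a k l * x l \<le> z k * a k l * z l" for k l
    using abs_ge_self[of "x k * a k l * x l"] nonneg[of k l] by (simp add: z_def abs_mult)
  hence "qform n a x \<le> qform n a z" unfolding qform_def by (intro sum_mono)
  hence zmax: "qform n a z = lam * sqnorm n z" using bound[of z] z1 unfolding lam_def by simp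
  have ev: "(\<Sum>l<n. a k l * z l) = lam * z k" if "k < n" for k
    using rayleigh_maximizer_eigenvector[OF sym _ zmax that] bound unfolding lam_def by blast
  have "z k > 0" if k: "k < n" for k
  proof (rule ccontr)
    assume "\<not> z k > 0"
    hence "z k = 0" unfolding z_def by simp
    hence "z l = 0" if "l < n" for l
      using nonneg_eigenvector_vanishes[of z lam k l] ev k that unfolding z_def by auto
    thus False using z1 unfolding sqnorm_def by simp
  qed
  with ev show ?thesis by blast
qed

end

locale perron = sym_irreducible +
  fixes p :: "nat \<Rightarrow> real" and lam :: real
  assumes p_pos: "\<And>k. k < n \<Longrightarrow> p k > 0"
    and p_eigen: "\<And>k. k < n \<Longrightarrow> (\<Sum>l<n. a k l * p l) = lam * p k"
begin

lemma p_nonneg: "k < n \<Longrightarrow> p k \<ge> 0"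
  using p_pos less_imp_le by blast

lemma eigenvalue_norm_le:
  fixes v :: "nat \<Rightarrow> 'b::real_normed_field"
  assumes ev: "\<And>k. k < n \<Longrightarrow> (\<Sum>l<n. of_real (a k l) * v l) = \<mu> * v k"
    and nz: "k0 < n" "v k0 \<noteq> 0"
  shows "norm \<mu> \<le> lam"
proof -
  have row: "norm \<mu> * norm (v k) \<le> (\<Sum>l<n. a k l * norm (v l))" if k: "k < n" for k
  proof -
    have "norm \<mu> * norm (v k) = norm (\<Sum>l<n. of_real (a k l) * v l)" using ev[OF k] by (simp add: norm_mult)
    also have "\<dots> \<le> (\<Sum>l<n. norm (of_real (a k l) * v l))" by (rule norm_sum)
    also have "\<dots> = (\<Sum>l<n. a k l * norm (v l))" using nonneg by (simp add: norm_mult)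
    finally show ?thesis .
  qed
  define S where "S = (\<Sum>k<n. p k * norm (v k))"
  have "norm \<mu> * S = (\<Sum>k<n. p k * (norm \<mu> * norm (v k)))"
    unfolding S_def by (simp add: sum_distrib_left mult_ac)
  also have "\<dots> \<le> (\<Sum>k<n. p k * (\<Sum>l<n. a k l * norm (v l)))"
    using row p_nonneg by (intro sum_mono mult_left_mono) auto
  also have "\<dots> = (\<Sum>k<n. \<Sum>l<n. p k * a l k * norm (v l))"
    by (simp add: sum_distrib_left sym mult_ac)
  also have "\<dots> = (\<Sum>l<n. norm (v l) * (\<Sum>k<n. a l k * p k))"
    by (subst sum.swap) (simp add: sum_distrib_left mult_ac)
  also have "\<dots> = lam * S"
    unfolding S_def using p_eigen by (simp add: sum_distrib_left mult_ac)
  finally have "norm \<mu> * S \<le> lam * S" .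
  moreover have "0 < p k0 * norm (v k0)" using nz p_pos by simp
  moreover have "p k0 * norm (v k0) \<le> S"
    unfolding S_def using nz p_nonneg by (intro member_le_sum) auto
  ultimately show ?thesis by (simp add: mult_right_le_imp_le)
qed

lemma lam_pos: "lam > 0"
proof (rule ccontr)
  assume "\<not> lam > 0"
  have n0: "0 < n" using n_ge_2 by simp
  have nn: "\<And>l. l \<in> {..<n} \<Longrightarrow> 0 \<le> a 0 l * p l"
    using nonneg p_nonneg by simp
  have "lam * p 0 \<le> 0" using \<open>\<not> lam > 0\<close> p_pos[OF n0] by (intro mult_nonpos_nonneg) auto
  moreover have "0 \<le> (\<Sum>l<n. a 0 l * p l)" using nn by (rule sum_nonneg)
  ultimately have sum0: "(\<Sum>l<n. a 0 l * p l) = 0" using p_eigen[OF n0] by linarith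
  have row0: "a 0 y = 0" if y: "y < n" for y
  proof -
    have "\<forall>l\<in>{..<n}. a 0 l * p l = 0"
      using sum_nonneg_eq_0_iff[of "{..<n}" "\<lambda>l. a 0 l * p l"] nn sum0 by simp
    hence "a 0 y * p y = 0" using y by simp
    thus ?thesis using p_pos[OF y] by simp
  qed
  have "{0} = {..<n}"
  proof (rule irreducible)
    show "{0} \<subseteq> {..<n}" "{0::nat} \<noteq> {}" using n0 by auto
    fix x y assume "x \<in> {0::nat}" "y < n" "a x y > 0"
    thus "y \<in> {0}" using row0 by auto
  qed
  moreover have "1 \<in> {..<n}" using n_ge_2 by simp
  ultimately have "(1::nat) \<in> {0}" by simp
  thus False by simp
qed

lemma positive_eigenvector_unique:
  assumes q_pos: "\<And>k. k < n \<Longrightarrow> q k > 0"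
    and q_eigen: "\<And>k. k < n \<Longrightarrow> (\<Sum>l<n. a k l * q l) = lam * q k"
  obtains c where "\<And>k. k < n \<Longrightarrow> q k = c * p k"
proof -
  define c where "c = Min ((\<lambda>k. q k / p k) ` {..<n})"
  have fin: "finite ((\<lambda>k. q k / p k) ` {..<n})" "(\<lambda>k. q k / p k) ` {..<n} \<noteq> {}"
    using n_ge_2 by (auto simp: lessThan_empty_iff)
  obtain k0 where k0: "k0 < n" "c = q k0 / p k0" using Min_in[OF fin] unfolding c_def by auto
  define v where "v = (\<lambda>k. q k - c * p k)"
  have v_nonneg: "v k \<ge> 0" if k: "k < n" for k
    using Min_le[OF fin(1), of "q k / p k"] k p_pos[OF k] unfolding v_def c_def by (simp add: pos_le_divide_eq)
  have v_eigen: "(\<Sum>l<n. a k l * v l) = lam * v k" if k: "k < n" for k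
  proof -
    have "(\<Sum>l<n. a k l * v l) = (\<Sum>l<n. a k l * q l) - c * (\<Sum>l<n. a k l * p l)"
      unfolding v_def by (simp add: algebra_simps sum_subtractf sum_distrib_left)
    thus ?thesis using q_eigen[OF k] p_eigen[OF k] unfolding v_def by (simp add: algebra_simps)
  qed
  have "v k0 = 0" unfolding v_def using k0 p_pos[OF k0(1)] by simp
  hence "v k = 0" if "k < n" for k using nonneg_eigenvector_vanishes[OF v_nonneg v_eigen k0(1)] that by blast
  thus ?thesis using that unfolding v_def by (metis eq_iff_diff_eq_0)
qed

text \<open>The entries of \<open>B = P\<^sup>-\<^sup>1 A P\<close> with \<open>P = diag p\<close>.\<close>
definition b :: "nat \<Rightarrow> nat \<Rightarrow> real" where "b k l = a k l * p l / p k"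

lemma b_nonneg: "k < n \<Longrightarrow> l < n \<Longrightarrow> b k l \<ge> 0"
  unfolding b_def using nonneg p_nonneg by simp

lemma b_pos_iff:
  assumes k: "k < n" and l: "l < n"
  shows "b k l > 0 \<longleftrightarrow> a k l > 0"
proof -
  have "b k l > 0 \<longleftrightarrow> a k l * p l > 0" using p_pos[OF k] by (simp add: b_def zero_less_divide_iff)
  also have "\<dots> \<longleftrightarrow> a k l > 0" using p_pos[OF l] by (simp add: zero_less_mult_iff)
  finally show ?thesis .
qed

lemma b_row_sum: "k < n \<Longrightarrow> (\<Sum>l<n. b k l) = lam"
  unfolding b_def using p_eigen[of k] p_pos[of k] by (simp add: sum_divide_distrib[symmetric])

end

context sym_irreducible
begin

lemma exists_normalized_perron_vector:
  obtains p lam where "perron n a p lam" and "(\<Sum>k<n. p k) = 1"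
proof -
  obtain q lam where q_pos: "\<forall>k<n. q k > 0" and q_eigen: "\<forall>k<n. (\<Sum>l<n. a k l * q l) = lam * q k"
    using exists_positive_eigenvector by blast
  define S where "S = (\<Sum>l<n. q l)"
  have S: "S > 0" unfolding S_def using q_pos n_ge_2 by (intro sum_pos) (auto simp: lessThan_empty_iff)
  have "perron n a (\<lambda>k. q k / S) lam"
  proof unfold_locales
    show "k < n \<Longrightarrow> q k / S > 0" for k using q_pos S by simp
    show "k < n \<Longrightarrow> (\<Sum>l<n. a k l * (q l / S)) = lam * (q k / S)" for k
      using q_eigen by (simp add: sum_divide_distrib[symmetric])
  qed
  moreover have "(\<Sum>k<n. q k / S) = 1" using S unfolding S_def by (simp add: sum_divide_distrib[symmetric])
  ultimately show ?thesis by (rule that)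
qed

end

section \<open>A minimum principle for the reduced matrix\<close>

context perron
begin

definition rest :: "nat \<Rightarrow> nat set" where "rest j = {l. l < n \<and> l \<noteq> j}"

text \<open>\<open>Lop j s\<close> is the matrix \<open>(lam + s) I - B\<^sub>j\<^sub>j\<close> acting on functions on \<open>V - {j}\<close>.\<close>
definition Lop :: "nat \<Rightarrow> real \<Rightarrow> (nat \<Rightarrow> real) \<Rightarrow> nat \<Rightarrow> real" where
  "Lop j s v k = (lam + s) * v k - (\<Sum>l\<in>rest j. b k l * v l)"

lemma finite_rest: "finite (rest j)"
  unfolding rest_def by auto

lemma sum_split_rest: "j < n \<Longrightarrow> (\<Sum>l<n. g l) = g j + (\<Sum>l\<in>rest j. g l)"
  using sum.remove[of "{..<n}" j g] unfolding rest_def by (simp add: set_diff_eq)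

lemma Lop_linear: "Lop j s (\<lambda>l. c1 * v l + c2 * w l) k = c1 * Lop j s v k + c2 * Lop j s w k"
  unfolding Lop_def by (simp add: algebra_simps sum.distrib sum_distrib_left)

lemma Lop_diff: "Lop j s (\<lambda>l. v l - w l) k = Lop j s v k - Lop j s w k"
  unfolding Lop_def by (simp add: algebra_simps sum_subtractf)

lemma Lop_shift: "Lop j s v k = Lop j 0 v k + s * v k"
  unfolding Lop_def by (simp add: algebra_simps)

text \<open>At a negative minimum \<open>m\<close> of \<open>v\<close> the row sums \<open>lam\<close> of \<open>B\<close> give
  \<open>Lop j s v k = s m + m b\<^sub>k\<^sub>j - \<Sum>\<^sub>l b\<^sub>k\<^sub>l (v\<^sub>l - m)\<close>, a sum of nonpositive terms.\<close>
lemma Lop_at_negative_minimum: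
  assumes j: "j < n" and s: "s \<ge> 0" and k: "k \<in> rest j"
    and m: "m < 0" "v k = m" and min: "\<And>l. l \<in> rest j \<Longrightarrow> m \<le> v l"
    and L: "Lop j s v k \<ge> 0"
  shows "b k j = 0" and "\<forall>l\<in>rest j. b k l > 0 \<longrightarrow> v l = m"
proof -
  have kn: "k < n" using k unfolding rest_def by auto
  have nn: "\<And>l. l \<in> rest j \<Longrightarrow> 0 \<le> b k l * (v l - m)"
    using b_nonneg kn min unfolding rest_def by simp
  have bsum: "(\<Sum>l\<in>rest j. b k l) = lam - b k j" using sum_split_rest[OF j, of "b k"] b_row_sum[OF kn] by simp
  have vsum: "(\<Sum>l\<in>rest j. b k l * v l) = (\<Sum>l\<in>rest j. b k l * (v l - m)) + m * (\<Sum>l\<in>rest j. b k l)"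
    by (simp add: algebra_simps sum.distrib sum_distrib_left sum_subtractf)
  have "Lop j s v k = s * m + m * b k j - (\<Sum>l\<in>rest j. b k l * (v l - m))"
    unfolding Lop_def vsum bsum m(2) by (simp add: algebra_simps)
  moreover have "s * m \<le> 0" using s m by (simp add: mult_nonneg_nonpos)
  moreover have "m * b k j \<le> 0" using b_nonneg[OF kn j] m by (simp add: mult_nonpos_nonneg)
  moreover have "(\<Sum>l\<in>rest j. b k l * (v l - m)) \<ge> 0" using nn by (rule sum_nonneg)
  ultimately have "m * b k j = 0" and sum0: "(\<Sum>l\<in>rest j. b k l * (v l - m)) = 0" using L by linarith+
  thus "b k j = 0" using m by simp
  show "\<forall>l\<in>rest j. b k l > 0 \<longrightarrow> v l = m" using sum0 sum_nonneg_eq_0_iff[OF finite_rest nn] by auto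
qed

lemma Lop_min_principle:
  assumes j: "j < n" and s: "s \<ge> 0" and L: "\<And>k. k \<in> rest j \<Longrightarrow> Lop j s v k \<ge> 0"
    and k: "k \<in> rest j"
  shows "v k \<ge> 0"
proof (rule ccontr)
  assume "\<not> v k \<ge> 0"
  define m where "m = Min (v ` rest j)"
  have fin: "finite (v ` rest j)" "v ` rest j \<noteq> {}" using finite_rest k by auto
  have min: "\<And>l. l \<in> rest j \<Longrightarrow> m \<le> v l" unfolding m_def using fin by auto
  have m: "m < 0" using min[OF k] \<open>\<not> v k \<ge> 0\<close> by simp
  obtain k0 where k0: "k0 \<in> rest j" "v k0 = m" using Min_in[OF fin] unfolding m_def by auto
  define Z where "Z = {l \<in> rest j. v l = m}"
  have "Z = {..<n}"
  proof (rule irreducible)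
    show "Z \<subseteq> {..<n}" "Z \<noteq> {}" using k0 unfolding Z_def rest_def by auto
    fix x y assume x: "x \<in> Z" and y: "y < n" and axy: "a x y > 0"
    have xr: "x \<in> rest j" "v x = m" using x unfolding Z_def by auto
    note at_min = Lop_at_negative_minimum[OF j s xr(1) m xr(2) min L[OF xr(1)]]
    have bxy: "b x y > 0" using b_pos_iff[of x y] xr(1) y axy unfolding rest_def by simp
    hence "y \<noteq> j" using at_min(1) by auto
    hence "y \<in> rest j" using y unfolding rest_def by simp
    thus "y \<in> Z" using at_min(2) bxy unfolding Z_def by simp
  qed
  thus False using j unfolding Z_def rest_def by auto
qed

lemma Lop_unique:
  assumes j: "j < n" and s: "s \<ge> 0"
    and eq: "\<And>k. k \<in> rest j \<Longrightarrow> Lop j s v k = Lop j s w k" and k: "k \<in> rest j"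
  shows "v k = w k"
  using Lop_min_principle[OF j s, of "\<lambda>l. v l - w l" k] Lop_min_principle[OF j s, of "\<lambda>l. w l - v l" k]
    k eq by (simp add: Lop_diff)

lemma rest_delete_index:
  assumes "j < n" and "k \<in> rest j"
  shows "delete_index j k < n - 1" and "insert_index j (delete_index j k) = k"
  using assms delete_index_less insert_delete_index unfolding rest_def by auto

definition Lmat :: "nat \<Rightarrow> real \<Rightarrow> real mat" where
  "Lmat j s = Matrix.mat (n-1) (n-1)
     (\<lambda>(x, y). (if x = y then lam + s else 0) - b (insert_index j x) (insert_index j y))"

definition extend :: "nat \<Rightarrow> real Matrix.vec \<Rightarrow> nat \<Rightarrow> real" where
  "extend j v l = (if l = j then 0 else v $ delete_index j l)"

lemma Lmat_carrier: "Lmat j s \<in> carrier_mat (n-1) (n-1)"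
  unfolding Lmat_def by simp

lemma Lop_extend:
  assumes j: "j < n" and k: "k \<in> rest j" and v: "v \<in> carrier_vec (n-1)"
  shows "Lop j s (extend j v) k = (Lmat j s *\<^sub>v v) $ delete_index j k"
proof -
  define x where "x = delete_index j k"
  have x: "x < n - 1" "insert_index j x = k" using rest_delete_index[OF j k] unfolding x_def by auto
  have "(Lmat j s *\<^sub>v v) $ x
      = (\<Sum>y<n-1. ((if x = y then lam + s else 0) - b k (insert_index j y)) * v $ y)"
    using x v by (subst mult_mat_vec_index_sum[OF Lmat_carrier]) (auto simp: Lmat_def intro!: sum.cong)
  also have "\<dots> = (\<Sum>y<n-1. if y = x then (lam + s) * v $ x else 0) - (\<Sum>y<n-1. b k (insert_index j y) * v $ y)"
    unfolding sum_subtractf[symmetric] by (intro sum.cong refl) (auto simp: left_diff_distrib)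
  also have "\<dots> = (lam + s) * v $ x - (\<Sum>l\<in>rest j. b k l * extend j v l)"
    using x(1) unfolding rest_def sum_insert_index[OF j] extend_def by simp
  finally show ?thesis unfolding Lop_def extend_def x_def[symmetric] using k unfolding rest_def by simp
qed

lemma Lmat_invertible:
  assumes j: "j < n" and s: "s \<ge> 0"
  shows "Lmat j s * minv (Lmat j s) = 1\<^sub>m (n-1) \<and> minv (Lmat j s) * Lmat j s = 1\<^sub>m (n-1)
     \<and> minv (Lmat j s) \<in> carrier_mat (n-1) (n-1)"
proof (rule minv_if_trivial_kernel[OF Lmat_carrier])
  fix v assume v: "v \<in> carrier_vec (n-1)" and Lv: "Lmat j s *\<^sub>v v = 0\<^sub>v (n-1)"
  have "Lop j s (extend j v) k = Lop j s (\<lambda>_. 0) k" if k: "k \<in> rest j" for k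
    using Lop_extend[OF j k v] Lv rest_delete_index[OF j k] unfolding Lop_def by simp
  hence ext0: "extend j v k = 0" if "k \<in> rest j" for k using Lop_unique[OF j s _ that] by blast
  have "v $ x = 0" if x: "x < n - 1" for x
    using ext0[of "insert_index j x"] insert_index_less[OF j x] unfolding rest_def extend_def by simp
  thus "v = 0\<^sub>v (n-1)" using v by (intro eq_vecI) auto
qed

definition Lsolve :: "nat \<Rightarrow> real \<Rightarrow> (nat \<Rightarrow> real) \<Rightarrow> nat \<Rightarrow> real" where
  "Lsolve j s f = extend j (minv (Lmat j s) *\<^sub>v Matrix.vec (n-1) (\<lambda>x. f (insert_index j x)))"

lemma Lsolve_at_j: "Lsolve j s f j = 0"
  unfolding Lsolve_def extend_def by simp

lemma Lop_Lsolve: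
  assumes j: "j < n" and s: "s \<ge> 0" and k: "k \<in> rest j"
  shows "Lop j s (Lsolve j s f) k = f k"
proof -
  define fv where "fv = Matrix.vec (n-1) (\<lambda>x. f (insert_index j x))"
  have inv: "Lmat j s * minv (Lmat j s) = 1\<^sub>m (n-1)" "minv (Lmat j s) \<in> carrier_mat (n-1) (n-1)"
    using Lmat_invertible[OF j s] by auto
  have fv: "fv \<in> carrier_vec (n-1)" unfolding fv_def by simp
  have "Lop j s (Lsolve j s f) k = (Lmat j s *\<^sub>v (minv (Lmat j s) *\<^sub>v fv)) $ delete_index j k"
    unfolding Lsolve_def fv_def[symmetric] using inv(2) fv by (intro Lop_extend[OF j k]) auto
  also have "Lmat j s *\<^sub>v (minv (Lmat j s) *\<^sub>v fv) = fv"
    using inv fv Lmat_carrier[of j s] by (metis assoc_mult_mat_vec one_mult_mat_vec)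
  finally show ?thesis using rest_delete_index[OF j k] unfolding fv_def by simp
qed

lemma Lsolve_nonneg:
  assumes j: "j < n" and s: "s \<ge> 0" and f: "\<And>k. k \<in> rest j \<Longrightarrow> f k \<ge> 0" and k: "k \<in> rest j"
  shows "Lsolve j s f k \<ge> 0"
  using Lop_min_principle[OF j s, of "Lsolve j s f" k] Lop_Lsolve[OF j s] f k by simp

definition Lones :: "nat \<Rightarrow> real \<Rightarrow> nat \<Rightarrow> real" where "Lones j s = Lsolve j s (\<lambda>_. 1)"

lemma Lones_at_j: "Lones j s j = 0"
  unfolding Lones_def by (rule Lsolve_at_j)

lemma Lop_Lones: "j < n \<Longrightarrow> s \<ge> 0 \<Longrightarrow> k \<in> rest j \<Longrightarrow> Lop j s (Lones j s) k = 1"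
  unfolding Lones_def by (rule Lop_Lsolve)

lemma Lones_nonneg: "j < n \<Longrightarrow> s \<ge> 0 \<Longrightarrow> k < n \<Longrightarrow> Lones j s k \<ge> 0"
  using Lsolve_nonneg[of j s "\<lambda>_. 1" k] Lones_at_j[of j s] unfolding Lones_def rest_def by fastforce

text \<open>With \<open>W = Lsolve j s u\<^sub>0\<close> one has \<open>u\<^sub>s = u\<^sub>0 - s W\<close> and \<open>0 \<le> W \<le> C u\<^sub>0\<close>, \<open>C = \<Sum> u\<^sub>0\<close>, by the
  minimum principle.\<close>
lemma Lones_perturbation:
  assumes j: "j < n" and s: "s \<ge> 0" and k: "k \<in> rest j"
  shows "\<bar>Lones j s k - Lones j 0 k\<bar> \<le> s * (\<Sum>l\<in>rest j. Lones j 0 l)\<^sup>2"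
proof -
  define u where "u = Lones j 0"
  define C where "C = (\<Sum>l\<in>rest j. u l)"
  define W where "W = Lsolve j s u"
  have u_nonneg: "u l \<ge> 0" if "l \<in> rest j" for l using Lones_nonneg[OF j] that unfolding u_def rest_def by simp
  have u_le: "u l \<le> C" if "l \<in> rest j" for l unfolding C_def using u_nonneg that by (intro member_le_sum finite_rest) auto
  have Lu: "Lop j s u l = 1 + s * u l" if "l \<in> rest j" for l
    using Lop_shift[of j s u l] Lop_Lones[OF j _ that, of 0] unfolding u_def by simp
  have LW: "Lop j s W l = u l" if "l \<in> rest j" for l using Lop_Lsolve[OF j s that] unfolding W_def .
  have L0: "Lop j s (\<lambda>l. 1 * (Lones j s l - u l) + s * W l) m = Lop j s (\<lambda>_. 0) m" if "m \<in> rest j" for m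
    unfolding Lop_linear Lop_diff using Lu[OF that] Lop_Lones[OF j s that] LW[OF that] by (simp add: Lop_def)
  have diff: "Lones j s k - u k = - (s * W k)" using Lop_unique[OF j s L0 k] by simp
  have Lpos: "Lop j s (\<lambda>l. C * u l + (-1) * W l) m \<ge> 0" if m: "m \<in> rest j" for m
  proof -
    have "0 \<le> C * (s * u m)" using u_nonneg[OF m] u_le[OF m] s by simp
    thus ?thesis unfolding Lop_linear Lu[OF m] LW[OF m] using u_le[OF m] by (simp add: algebra_simps)
  qed
  have "W k \<le> C * u k" using Lop_min_principle[OF j s Lpos k] by simp
  moreover have "W k \<ge> 0" unfolding W_def using Lsolve_nonneg[OF j s u_nonneg k] .
  ultimately have "\<bar>Lones j s k - u k\<bar> \<le> s * (C * u k)" unfolding diff using s by (simp add: mult_left_mono)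
  also have "\<dots> \<le> s * (C * C)" using u_le[OF k] u_nonneg[OF k] s C_def
    by (intro mult_left_mono) (auto intro: mult_left_mono order_trans)
  finally show ?thesis unfolding u_def C_def by (simp add: power2_eq_square)
qed

lemma Lones_tendsto:
  assumes j: "j < n" and k: "k \<in> rest j"
  shows "((\<lambda>x. Lones j (1 / x) k) \<longlongrightarrow> Lones j 0 k) at_top"
proof -
  define C where "C = (\<Sum>l\<in>rest j. Lones j 0 l)\<^sup>2"
  have close: "\<forall>\<^sub>F x in at_top. \<bar>Lones j (1 / x) k - Lones j 0 k\<bar> \<le> C / x"
    using eventually_gt_at_top[of 0]
  proof eventually_elim
    case (elim x)
    thus ?case using Lones_perturbation[OF j _ k, of "1 / x"] by (simp add: C_def)
  qed
  have C0: "((\<lambda>x. C / x) \<longlongrightarrow> 0) at_top" by real_asymp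
  show ?thesis
  proof (rule tendsto_sandwich)
    show "\<forall>\<^sub>F x in at_top. Lones j 0 k - C / x \<le> Lones j (1 / x) k"
      using close by eventually_elim (simp add: abs_le_iff)
    show "\<forall>\<^sub>F x in at_top. Lones j (1 / x) k \<le> Lones j 0 k + C / x"
      using close by eventually_elim (simp add: abs_le_iff)
  qed (use tendsto_add[OF tendsto_const C0] tendsto_diff[OF tendsto_const C0] in simp_all)
qed

end

section \<open>The resolvent\<close>

locale perron_matrix = perron +
  fixes A :: "real mat"
  assumes A_carrier: "A \<in> carrier_mat n n"
    and A_index: "\<And>k l. k < n \<Longrightarrow> l < n \<Longrightarrow> A $$ (k, l) = a k l"
begin

lemma A_mult_vec: "v \<in> carrier_vec n \<Longrightarrow> k < n \<Longrightarrow> (A *\<^sub>v v) $ k = (\<Sum>l<n. a k l * v $ l)"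
  by (simp add: mult_mat_vec_index_sum[OF A_carrier] A_index)

definition Tmat :: "real \<Rightarrow> real mat" where "Tmat s = 1\<^sub>m n - (1 / (lam + s)) \<cdot>\<^sub>m A"

definition Rmat :: "real \<Rightarrow> real mat" where "Rmat s = minv (Tmat s)"

lemma Tmat_carrier: "Tmat s \<in> carrier_mat n n"
  unfolding Tmat_def using A_carrier by auto

lemma Tmat_index: "k < n \<Longrightarrow> l < n \<Longrightarrow> Tmat s $$ (k, l) = (if k = l then 1 else 0) - a k l / (lam + s)"
  unfolding Tmat_def using A_carrier A_index by auto

lemma Tmat_mult_vec:
  assumes v: "v \<in> carrier_vec n" and k: "k < n"
  shows "(Tmat s *\<^sub>v v) $ k = v $ k - (\<Sum>l<n. a k l * v $ l) / (lam + s)"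
proof -
  have "(Tmat s *\<^sub>v v) $ k = (\<Sum>l<n. (if l = k then v $ k else 0) - a k l * v $ l / (lam + s))"
    using k by (auto simp: mult_mat_vec_index_sum[OF Tmat_carrier v k] Tmat_index left_diff_distrib intro!: sum.cong)
  also have "\<dots> = v $ k - (\<Sum>l<n. a k l * v $ l) / (lam + s)"
    using k by (simp add: sum_subtractf sum.delta sum_divide_distrib)
  finally show ?thesis .
qed

lemma Tmat_invertible:
  assumes s: "s > 0"
  shows "Tmat s * Rmat s = 1\<^sub>m n \<and> Rmat s * Tmat s = 1\<^sub>m n \<and> Rmat s \<in> carrier_mat n n"
  unfolding Rmat_def
proof (rule minv_if_trivial_kernel[OF Tmat_carrier])
  fix v :: "real Matrix.vec" assume v: "v \<in> carrier_vec n" and Tv: "Tmat s *\<^sub>v v = 0\<^sub>v n"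
  have ls: "lam + s > 0" using lam_pos s by simp
  have ev: "(\<Sum>l<n. of_real (a k l) * v $ l) = (lam + s) * v $ k" if k: "k < n" for k
    using Tmat_mult_vec[OF v k, of s] Tv k ls by (simp add: field_simps)
  show "v = 0\<^sub>v n"
  proof (rule ccontr)
    assume "v \<noteq> 0\<^sub>v n"
    then obtain k0 where "k0 < n" "v $ k0 \<noteq> 0" using nonzero_vec_index[OF v] by blast
    hence "norm (lam + s) \<le> lam" using eigenvalue_norm_le[of "\<lambda>l. v $ l" "lam + s" k0] ev by simp
    thus False using ls s by simp
  qed
qed

lemma Rmat_symmetric:
  assumes s: "s > 0" and i: "i < n" and j: "j < n"
  shows "Rmat s $$ (i, j) = Rmat s $$ (j, i)"
proof -
  have inv: "Tmat s * Rmat s = 1\<^sub>m n" "Rmat s \<in> carrier_mat n n" using Tmat_invertible[OF s] by auto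
  have "transpose_mat (Tmat s) = Tmat s"
    using carrier_matD[OF Tmat_carrier[of s]] by (intro eq_matI) (auto simp: Tmat_index sym)
  hence "transpose_mat (Rmat s) = Rmat s"
    using minv_symmetric[OF Tmat_carrier] inv unfolding Rmat_def by blast
  thus ?thesis using inv(2) i j by (metis carrier_matD index_transpose_mat(1))
qed

lemma Rmat_column:
  assumes s: "s > 0" and j: "j < n" and i: "i < n"
    and y: "y \<in> carrier_vec n" and Ty: "Tmat s *\<^sub>v y = unit_vec n j"
  shows "Rmat s $$ (i, j) = y $ i"
proof -
  have inv: "Rmat s * Tmat s = 1\<^sub>m n" "Rmat s \<in> carrier_mat n n" using Tmat_invertible[OF s] by auto
  have "y = (Rmat s * Tmat s) *\<^sub>v y" using inv y by simp
  also have "\<dots> = Rmat s *\<^sub>v unit_vec n j" using assoc_mult_mat_vec[OF inv(2) Tmat_carrier y] Ty by simp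
  finally have "y $ i = (Rmat s *\<^sub>v unit_vec n j) $ i" by simp
  also have "\<dots> = Rmat s $$ (i, j)"
    using inv(2) i j by (simp add: mult_mat_vec_index_sum[OF inv(2)] if_distrib sum.delta cong: if_cong)
  finally show ?thesis by simp
qed

lemma weighted_Lones_sum:
  assumes j: "j < n" and s: "s \<ge> 0" and k: "k \<in> rest j"
  shows "(\<Sum>l<n. a k l * p l * Lones j s l) = p k * ((lam + s) * Lones j s k - 1)"
proof -
  have kn: "k < n" using k unfolding rest_def by simp
  have "(\<Sum>l<n. a k l * p l * Lones j s l) = p k * (\<Sum>l<n. b k l * Lones j s l)"
    using p_pos[OF kn] by (simp add: sum_distrib_left b_def)
  also have "(\<Sum>l<n. b k l * Lones j s l) = (\<Sum>l\<in>rest j. b k l * Lones j s l)"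
    using sum_split_rest[OF j, of "\<lambda>l. b k l * Lones j s l"] by (simp add: Lones_at_j)
  also have "\<dots> = (lam + s) * Lones j s k - 1" using Lop_Lones[OF j s k] unfolding Lop_def by simp
  finally show ?thesis .
qed

lemma weighted_Lones_sum_nonneg: "j < n \<Longrightarrow> s \<ge> 0 \<Longrightarrow> (\<Sum>l<n. a j l * p l * Lones j s l) \<ge> 0"
  using nonneg p_nonneg Lones_nonneg by (intro sum_nonneg) simp

definition cscale :: "nat \<Rightarrow> real \<Rightarrow> real" where
  "cscale j s = (lam + s) / (s * (p j + (\<Sum>l<n. a j l * p l * Lones j s l)))"

definition Rcol :: "nat \<Rightarrow> real \<Rightarrow> real Matrix.vec" where
  "Rcol j s = Matrix.vec n (\<lambda>k. cscale j s * p k * (1 - s * Lones j s k))"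

lemma cscale_pos: "j < n \<Longrightarrow> s > 0 \<Longrightarrow> cscale j s > 0"
  unfolding cscale_def using weighted_Lones_sum_nonneg[of j s] p_pos[of j] lam_pos
  by (intro divide_pos_pos mult_pos_pos) auto

lemma Tmat_Rcol:
  assumes s: "s > 0" and j: "j < n"
  shows "Tmat s *\<^sub>v Rcol j s = unit_vec n j"
proof (rule eq_vecI)
  fix k assume "k < dim_vec (unit_vec n j :: real Matrix.vec)"
  hence k: "k < n" by simp
  define c where "c = cscale j s"
  define u where "u = Lones j s"
  define S where "S = (\<Sum>l<n. a k l * p l * u l)"
  have ls: "lam + s > 0" using lam_pos s by simp
  have "(\<Sum>l<n. a k l * Rcol j s $ l) = (\<Sum>l<n. c * (a k l * p l) - c * s * (a k l * p l * u l))"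
    unfolding Rcol_def c_def u_def by (intro sum.cong) (auto simp: algebra_simps)
  also have "\<dots> = c * (lam * p k - s * S)"
    unfolding S_def using p_eigen[OF k] by (simp add: sum_subtractf sum_distrib_left[symmetric] algebra_simps)
  finally have T: "(Tmat s *\<^sub>v Rcol j s) $ k = c * s * (p k + S - (lam + s) * (p k * u k)) / (lam + s)"
    using Tmat_mult_vec[of "Rcol j s" k s] k ls unfolding Rcol_def c_def u_def by (simp add: field_simps)
  show "(Tmat s *\<^sub>v Rcol j s) $ k = unit_vec n j $ k"
  proof (cases "k = j")
    case True
    have "p j + S > 0"
      using weighted_Lones_sum_nonneg[OF j, of s] p_pos[OF j] s True unfolding S_def u_def by simp
    thus ?thesis using T True ls s j unfolding c_def cscale_def S_def u_def by (simp add: Lones_at_j)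
  next
    case False
    hence "S = p k * ((lam + s) * u k - 1)"
      using weighted_Lones_sum[OF j _ , of s k] s k unfolding S_def u_def rest_def by simp
    thus ?thesis using T False k j by (simp add: algebra_simps)
  qed
qed (use carrier_matD[OF Tmat_carrier[of s]] in simp)

lemma Rmat_index:
  assumes s: "s > 0" and j: "j < n" and i: "i < n"
  shows "Rmat s $$ (i, j) = cscale j s * p i * (1 - s * Lones j s i)"
  using Rmat_column[OF s j i _ Tmat_Rcol[OF s j]] i unfolding Rcol_def by simp

end

section \<open>Asymptotics of the walk distance\<close>

lemma theta_div_tendsto:
  assumes "n \<ge> 1"
  shows "((\<lambda>x. theta n x / x) \<longlongrightarrow> 2 / real n) at_top"
proof -
  have "((\<lambda>x. ln (exp 1 + x powr (2 / real n)) * (x - 1) / ln x / x) \<longlongrightarrow> 2 / real n) at_top"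
    using assms by real_asymp
  moreover have "\<forall>\<^sub>F x in at_top. ln (exp 1 + x powr (2 / real n)) * (x - 1) / ln x / x = theta n x / x"
    using eventually_gt_at_top[of 1] by eventually_elim (simp add: theta_def)
  ultimately show ?thesis by (rule Lim_transform_eventually)
qed

text \<open>Squeeze with \<open>-t - 2t\<^sup>2 \<le> ln (1 - t) \<le> -t\<close> for \<open>0 \<le> t \<le> 1/2\<close>.\<close>
lemma tendsto_mult_ln_one_minus:
  fixes f :: "real \<Rightarrow> real"
  assumes f: "(f \<longlongrightarrow> f0) at_top" and f_nonneg: "\<forall>\<^sub>F x in at_top. f x \<ge> 0"
  shows "((\<lambda>x. x * ln (1 - f x / x)) \<longlongrightarrow> - f0) at_top"
proof -
  have inv: "((\<lambda>x. 1 / x :: real) \<longlongrightarrow> 0) at_top" by real_asymp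
  have q: "((\<lambda>x. f x / x) \<longlongrightarrow> 0) at_top" using tendsto_mult[OF f inv] by simp
  have half: "\<forall>\<^sub>F x in at_top. f x / x \<le> 1/2" using order_tendstoD(2)[OF q, of "1/2"] by (auto elim: eventually_mono)
  have up: "((\<lambda>x. - f x) \<longlongrightarrow> - f0) at_top" using f by (intro tendsto_intros)
  have lo: "((\<lambda>x. - f x - 2 * (f x * (f x / x))) \<longlongrightarrow> - f0) at_top"
    using tendsto_diff[OF up tendsto_mult[OF tendsto_const tendsto_mult[OF f q]], of 2] by simp
  show ?thesis
  proof (rule tendsto_sandwich[OF _ _ lo up])
    show "\<forall>\<^sub>F x in at_top. - f x - 2 * (f x * (f x / x)) \<le> x * ln (1 - f x / x)"
      using eventually_gt_at_top[of 0] f_nonneg half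
    proof eventually_elim
      case (elim x)
      have "- (f x / x) - 2 * (f x / x)\<^sup>2 \<le> ln (1 - f x / x)"
        by (rule ln_one_minus_pos_lower_bound) (use elim in auto)
      hence "x * (- (f x / x) - 2 * (f x / x)\<^sup>2) \<le> x * ln (1 - f x / x)"
        using elim by (intro mult_left_mono) auto
      moreover have "x * (- (f x / x) - 2 * (f x / x)\<^sup>2) = - f x - 2 * (f x * (f x / x))"
        using elim by (simp add: field_simps power2_eq_square)
      ultimately show ?case by linarith
    qed
    show "\<forall>\<^sub>F x in at_top. x * ln (1 - f x / x) \<le> - f x"
      using eventually_gt_at_top[of 0] f_nonneg half
    proof eventually_elim
      case (elim x)
      have "ln (1 - f x / x) \<le> - (f x / x)" using ln_le_minus_one[of "1 - f x / x"] elim by auto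
      hence "x * ln (1 - f x / x) \<le> x * (- (f x / x))" using elim by (intro mult_left_mono) auto
      thus ?case using elim by simp
    qed
  qed
qed

lemma theta_ln_bracket_tendsto:
  fixes f g :: "real \<Rightarrow> real"
  assumes n: "n \<ge> 1" and f: "(f \<longlongrightarrow> f0) at_top" and g: "(g \<longlongrightarrow> g0) at_top"
    and f_nonneg: "\<forall>\<^sub>F x in at_top. f x \<ge> 0" and g_nonneg: "\<forall>\<^sub>F x in at_top. g x \<ge> 0"
  shows "((\<lambda>x. theta n x * (- (ln (1 - f x / x) + ln (1 - g x / x)) / 2)) \<longlongrightarrow> (f0 + g0) / real n) at_top"
proof -
  have "((\<lambda>x. (theta n x / x) * (- (x * ln (1 - f x / x) + x * ln (1 - g x / x)) / 2))
      \<longlongrightarrow> (2 / real n) * (- (- f0 + - g0) / 2)) at_top"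
    by (intro tendsto_intros theta_div_tendsto n tendsto_mult_ln_one_minus f g f_nonneg g_nonneg) simp
  moreover have "\<forall>\<^sub>F x in at_top. (theta n x / x) * (- (x * ln (1 - f x / x) + x * ln (1 - g x / x)) / 2)
      = theta n x * (- (ln (1 - f x / x) + ln (1 - g x / x)) / 2)"
    using eventually_gt_at_top[of 0] by eventually_elim (simp add: field_simps)
  moreover have "(2 / real n) * (- (- f0 + - g0) / 2) = (f0 + g0) / real n" using n by (simp add: field_simps)
  ultimately show ?thesis using Lim_transform_eventually by fastforce
qed

definition edge_weight :: "'e set \<Rightarrow> ('e \<Rightarrow> nat set) \<Rightarrow> ('e \<Rightarrow> real) \<Rightarrow> nat \<Rightarrow> nat \<Rightarrow> real" where
  "edge_weight E ends w k l = (\<Sum>e\<in>{e\<in>E. ends e = {k, l}}. w e)"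

lemma wadj_carrier: "wadj n E ends w \<in> carrier_mat n n"
  unfolding wadj_def by simp

lemma wadj_index: "k < n \<Longrightarrow> l < n \<Longrightarrow> wadj n E ends w $$ (k, l) = edge_weight E ends w k l"
  unfolding wadj_def edge_weight_def by simp

lemma connected_wmultigraph_sym_irreducible:
  assumes n: "n \<ge> 2" and G: "wmultigraph n E ends w" and C: "connected_graph n E ends"
  shows "sym_irreducible n (edge_weight E ends w)"
proof
  have fin: "finite E" and w_pos: "\<And>e. e \<in> E \<Longrightarrow> w e > 0"
    and ends: "\<And>e. e \<in> E \<Longrightarrow> ends e \<subseteq> {0..<n}"
    using G unfolding wmultigraph_def by auto
  show "n \<ge> 2" by (rule n)
  show "edge_weight E ends w k l = edge_weight E ends w l k" for k l
    unfolding edge_weight_def by (simp add: insert_commute)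
  show "edge_weight E ends w k l \<ge> 0" for k l
    unfolding edge_weight_def using w_pos by (intro sum_nonneg) (auto intro: less_imp_le)
  fix Z assume Z: "Z \<subseteq> {..<n}" "Z \<noteq> {}"
    and closed: "\<And>k l. k \<in> Z \<Longrightarrow> l < n \<Longrightarrow> edge_weight E ends w k l > 0 \<Longrightarrow> l \<in> Z"
  obtain z where z: "z \<in> Z" using Z(2) by auto
  have "y \<in> Z" if "(z, y) \<in> (adjacent E ends)\<^sup>*" for y
    using that
  proof (induction rule: rtrancl_induct)
    case base
    show ?case by (rule z)
  next
    case (step y y')
    then obtain e where e: "e \<in> E" "ends e = {y, y'}" unfolding adjacent_def by auto
    have "w e \<le> edge_weight E ends w y y'"
      unfolding edge_weight_def using e fin w_pos by (intro member_le_sum) (auto intro: less_imp_le)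
    hence "edge_weight E ends w y y' > 0" using w_pos[OF e(1)] by simp
    moreover have "y' < n" using ends[OF e(1)] e(2) by auto
    ultimately show ?case using closed[OF step.IH] by simp
  qed
  thus "Z = {..<n}" using C z Z(1) unfolding connected_graph_def by blast
qed

section \<open>Identification with the long walk distance\<close>

context perron_matrix
begin

lemma complex_A_mult_vec:
  "v \<in> carrier_vec n \<Longrightarrow> k < n \<Longrightarrow>
    (map_mat complex_of_real A *\<^sub>v v) $ k = (\<Sum>l<n. of_real (a k l) * v $ l)"
proof -
  assume v: "v \<in> carrier_vec n" and k: "k < n"
  have C: "map_mat complex_of_real A \<in> carrier_mat n n" using A_carrier by simp
  have "(map_mat complex_of_real A *\<^sub>v v) $ k = (\<Sum>l<n. map_mat complex_of_real A $$ (k, l) * v $ l)"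
    by (rule mult_mat_vec_index_sum[OF C v k])
  also have "\<dots> = (\<Sum>l<n. of_real (a k l) * v $ l)" using k A_carrier A_index by (intro sum.cong) auto
  finally show ?thesis .
qed

lemma spectral_radius_le_lam: "spectral_radius (map_mat complex_of_real A) \<le> lam"
proof -
  let ?C = "map_mat complex_of_real A"
  have C: "?C \<in> carrier_mat n n" using A_carrier by simp
  obtain \<mu> where mu: "\<mu> \<in> spectrum ?C" "spectral_radius ?C = norm \<mu>"
    using spectral_radius_mem_max(1)[OF C] n_ge_2 by auto
  then obtain v where "eigenvector ?C v \<mu>" unfolding spectrum_def eigenvalue_def by auto
  hence v: "v \<in> carrier_vec n" "v \<noteq> 0\<^sub>v n" "?C *\<^sub>v v = \<mu> \<cdot>\<^sub>v v" unfolding eigenvector_def using C by auto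
  obtain k0 where "k0 < n" "v $ k0 \<noteq> 0" using nonzero_vec_index[OF v(1,2)] .
  moreover have "(\<Sum>l<n. of_real (a k l) * v $ l) = \<mu> * v $ k" if k: "k < n" for k
    using complex_A_mult_vec[OF v(1) k] v k by (metis carrier_vecD index_smult_vec(1))
  ultimately have "norm \<mu> \<le> lam" using eigenvalue_norm_le[of "\<lambda>l. v $ l"] by blast
  thus ?thesis using mu by simp
qed

lemma lam_in_spectrum: "complex_of_real lam \<in> spectrum (map_mat complex_of_real A)"
proof -
  let ?C = "map_mat complex_of_real A"
  define v where "v = Matrix.vec n (\<lambda>k. complex_of_real (p k))"
  have "v $ 0 \<noteq> 0" using p_pos[of 0] n_ge_2 unfolding v_def by simp
  hence "v \<noteq> 0\<^sub>v n" using n_ge_2 by auto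
  moreover have "?C *\<^sub>v v = complex_of_real lam \<cdot>\<^sub>v v"
  proof (rule eq_vecI)
    fix k assume "k < dim_vec (complex_of_real lam \<cdot>\<^sub>v v)"
    hence k: "k < n" unfolding v_def by simp
    have "(?C *\<^sub>v v) $ k = complex_of_real (\<Sum>l<n. a k l * p l)"
      using complex_A_mult_vec[of v k] k unfolding v_def by simp
    thus "(?C *\<^sub>v v) $ k = (complex_of_real lam \<cdot>\<^sub>v v) $ k" using p_eigen[OF k] k unfolding v_def by simp
  qed (use A_carrier in \<open>simp add: v_def\<close>)
  ultimately have "eigenvector ?C v (complex_of_real lam)" using A_carrier unfolding eigenvector_def v_def by auto
  thus ?thesis unfolding spectrum_def eigenvalue_def by auto
qed

lemma rho_eq: "rho A = lam"
proof -
  have C: "map_mat complex_of_real A \<in> carrier_mat n n" using A_carrier by simp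
  have "norm (complex_of_real lam) \<le> spectral_radius (map_mat complex_of_real A)"
    using spectral_radius_mem_max(2)[OF C _ imageI[OF lam_in_spectrum]] n_ge_2 by simp
  thus ?thesis unfolding rho_def using spectral_radius_le_lam lam_pos by simp
qed

lemma perron_vec_eq:
  assumes p_sum: "(\<Sum>k<n. p k) = 1"
  shows "perron_vec A = Matrix.vec n p"
  unfolding perron_vec_def rho_eq carrier_matD(1)[OF A_carrier]
proof (rule the_equality)
  show "Matrix.vec n p \<in> carrier_vec n \<and> (\<forall>i<n. 0 < Matrix.vec n p $ i) \<and>
      A *\<^sub>v Matrix.vec n p = lam \<cdot>\<^sub>v Matrix.vec n p \<and> (\<Sum>i<n. Matrix.vec n p $ i) = 1"
    using p_pos p_sum p_eigen A_carrier by (auto intro!: eq_vecI simp: A_mult_vec)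
  fix q assume q: "q \<in> carrier_vec n \<and> (\<forall>i<n. 0 < q $ i) \<and> A *\<^sub>v q = lam \<cdot>\<^sub>v q \<and> (\<Sum>i<n. q $ i) = 1"
  have "(\<Sum>l<n. a k l * q $ l) = lam * q $ k" if k: "k < n" for k
    using A_mult_vec[of q k] q k by (metis carrier_vecD index_smult_vec(1))
  then obtain c where c: "\<And>k. k < n \<Longrightarrow> q $ k = c * p k"
    using positive_eigenvector_unique[of "\<lambda>k. q $ k"] q by blast
  have "1 = c * (\<Sum>k<n. p k)" using q c by (simp add: sum_distrib_left)
  hence "c = 1" using p_sum by simp
  thus "q = Matrix.vec n p" using q c by (intro eq_vecI) auto
qed

definition Pm :: "real mat" where "Pm = diag_of_vec (Matrix.vec n p)"

definition Bm :: "real mat" where "Bm = minv Pm * A * Pm"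

definition Pinv :: "real mat" where "Pinv = Matrix.mat n n (\<lambda>(k, l). if k = l then 1 / p k else 0)"

lemma Pm_carrier: "Pm \<in> carrier_mat n n"
  unfolding Pm_def diag_of_vec_def by simp

lemma Pm_index: "k < n \<Longrightarrow> l < n \<Longrightarrow> Pm $$ (k, l) = (if k = l then p k else 0)"
  unfolding Pm_def diag_of_vec_def by simp

lemma Pinv_carrier: "Pinv \<in> carrier_mat n n"
  unfolding Pinv_def by simp

lemma minv_Pm: "minv Pm = Pinv"
proof (rule minv_eq_right_inverse[OF Pm_carrier Pinv_carrier])
  show "Pm * Pinv = 1\<^sub>m n"
  proof (rule eq_matI)
    fix k l assume "k < dim_row (1\<^sub>m n :: real mat)" "l < dim_col (1\<^sub>m n :: real mat)"
    hence k: "k < n" and l: "l < n" by auto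
    have "(Pm * Pinv) $$ (k, l) = (\<Sum>r<n. Pm $$ (k, r) * Pinv $$ (r, l))"
      by (rule mult_mat_index_sum[OF Pm_carrier Pinv_carrier k l])
    also have "\<dots> = (\<Sum>r<n. if r = k then p k * (if k = l then 1 / p k else 0) else 0)"
      using k l by (intro sum.cong) (auto simp: Pm_index Pinv_def)
    finally show "(Pm * Pinv) $$ (k, l) = 1\<^sub>m n $$ (k, l)" using k l p_pos[OF k] p_pos[OF l] by simp
  qed (use Pm_carrier Pinv_carrier in auto)
qed

lemma Bm_carrier: "Bm \<in> carrier_mat n n"
  unfolding Bm_def minv_Pm using Pinv_carrier A_carrier Pm_carrier by auto

lemma Bm_index:
  assumes k: "k < n" and l: "l < n"
  shows "Bm $$ (k, l) = b k l"
proof -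
  have PA: "Pinv * A \<in> carrier_mat n n" using Pinv_carrier A_carrier by auto
  have PA_index: "(Pinv * A) $$ (k, r) = a k r / p k" if r: "r < n" for r
  proof -
    have "(Pinv * A) $$ (k, r) = (\<Sum>m<n. Pinv $$ (k, m) * A $$ (m, r))"
      by (rule mult_mat_index_sum[OF Pinv_carrier A_carrier k r])
    also have "\<dots> = (\<Sum>m<n. if m = k then a k r / p k else 0)"
      using k r by (intro sum.cong) (auto simp: Pinv_def A_index)
    finally show ?thesis using k by simp
  qed
  have "Bm $$ (k, l) = (\<Sum>r<n. (Pinv * A) $$ (k, r) * Pm $$ (r, l))"
    unfolding Bm_def minv_Pm by (rule mult_mat_index_sum[OF PA Pm_carrier k l])
  also have "\<dots> = (\<Sum>r<n. if r = l then a k l / p k * p l else 0)"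
    using l by (intro sum.cong) (auto simp: PA_index Pm_index)
  finally show ?thesis using l by (simp add: b_def)
qed

lemma mat_delete_Bm: "j < n \<Longrightarrow> mat_delete (lam \<cdot>\<^sub>m 1\<^sub>m n - Bm) j j = Lmat j 0"
  using Bm_carrier insert_index_less
  by (intro eq_matI) (auto simp: mat_delete_def Lmat_def Bm_index insert_index_def[symmetric])

lemma row_inv_del_sum_eq:
  assumes i: "i < n" and j: "j < n" and ij: "i \<noteq> j"
  shows "row_inv_del_sum Bm lam j i = Lones j 0 i"
proof -
  define M where "M = minv (Lmat j 0)"
  have M: "M \<in> carrier_mat (n-1) (n-1)" using Lmat_invertible[OF j, of 0] unfolding M_def by simp
  have di: "delete_index j i < n - 1" using delete_index_less[OF j i ij] .
  have "row_inv_del_sum Bm lam j i = (\<Sum>k<n-1. M $$ (delete_index j i, k))"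
    unfolding row_inv_del_sum_def Let_def carrier_matD(1)[OF Bm_carrier] mat_delete_Bm[OF j] M_def by simp
  also have "\<dots> = (M *\<^sub>v Matrix.vec (n-1) (\<lambda>_. 1)) $ delete_index j i"
    by (simp add: mult_mat_vec_index_sum[OF M _ di])
  also have "\<dots> = Lones j 0 i" unfolding Lones_def Lsolve_def extend_def M_def using ij by simp
  finally show ?thesis .
qed

lemma resolvent_eq: "x > 0 \<Longrightarrow> resolvent A x = Rmat (1 / x)"
  unfolding resolvent_def Let_def Rmat_def Tmat_def rho_eq using A_carrier by simp

lemma ln_resolvent_bracket:
  assumes s: "s > 0" and i: "i < n" and j: "j < n"
    and X: "1 - s * Lones j s i > 0" and Y: "1 - s * Lones i s j > 0"
  shows "(ln (Rmat s $$ (i, i)) + ln (Rmat s $$ (j, j))) / 2 - ln (Rmat s $$ (i, j))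
       = - (ln (1 - s * Lones j s i) + ln (1 - s * Lones i s j)) / 2"
proof -
  have pos: "cscale i s > 0" "cscale j s > 0" "p i > 0" "p j > 0" using cscale_pos s i j p_pos by auto
  have "ln (Rmat s $$ (i, j)) = ln (cscale j s) + ln (p i) + ln (1 - s * Lones j s i)"
    unfolding Rmat_index[OF s j i] using pos X by (simp add: ln_mult)
  moreover have "ln (Rmat s $$ (i, j)) = ln (cscale i s) + ln (p j) + ln (1 - s * Lones i s j)"
    unfolding Rmat_symmetric[OF s i j] Rmat_index[OF s i j] using pos Y by (simp add: ln_mult)
  moreover have "ln (Rmat s $$ (i, i)) = ln (cscale i s) + ln (p i)"
    unfolding Rmat_index[OF s i i] using pos by (simp add: ln_mult Lones_at_j)
  moreover have "ln (Rmat s $$ (j, j)) = ln (cscale j s) + ln (p j)"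
    unfolding Rmat_index[OF s j j] using pos by (simp add: ln_mult Lones_at_j)
  ultimately have "ln (Rmat s $$ (i, i)) + ln (Rmat s $$ (j, j)) - 2 * ln (Rmat s $$ (i, j))
      = - (ln (1 - s * Lones j s i) + ln (1 - s * Lones i s j))" by linarith
  thus ?thesis by (simp add: field_simps)
qed

lemma dW_eq:
  assumes x: "x > 0" and i: "i < n" and j: "j < n"
    and X: "Lones j (1 / x) i < x" and Y: "Lones i (1 / x) j < x"
  shows "dW A x i j = theta n x * (- (ln (1 - Lones j (1 / x) i / x) + ln (1 - Lones i (1 / x) j / x)) / 2)"
proof -
  have "1 - 1 / x * Lones j (1 / x) i > 0" "1 - 1 / x * Lones i (1 / x) j > 0" using x X Y by simp_all
  from ln_resolvent_bracket[OF _ i j this] show ?thesis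
    using x A_carrier unfolding dW_def Let_def resolvent_eq[OF x] by simp
qed

lemma dW_tendsto:
  assumes i: "i < n" and j: "j < n" and ij: "i \<noteq> j"
  shows "((\<lambda>x. dW A x i j) \<longlongrightarrow> (Lones j 0 i + Lones i 0 j) / real n) at_top"
proof -
  define f where "f x = Lones j (1 / x) i" for x
  define g where "g x = Lones i (1 / x) j" for x
  have f: "(f \<longlongrightarrow> Lones j 0 i) at_top" and g: "(g \<longlongrightarrow> Lones i 0 j) at_top"
    unfolding f_def g_def using Lones_tendsto i j ij unfolding rest_def by auto
  have nonneg: "\<forall>\<^sub>F x in at_top. f x \<ge> 0" "\<forall>\<^sub>F x in at_top. g x \<ge> 0"
    using eventually_gt_at_top[of 0] by (eventually_elim, simp add: f_def g_def Lones_nonneg i j)+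
  have "\<forall>\<^sub>F x in at_top. x > max (Lones j 0 i + 1) (Lones i 0 j + 1)" by (rule eventually_gt_at_top)
  hence "\<forall>\<^sub>F x in at_top. x > 0 \<and> f x < x \<and> g x < x"
    using order_tendstoD(2)[OF f less_add_one] order_tendstoD(2)[OF g less_add_one] nonneg
    by eventually_elim auto
  hence "\<forall>\<^sub>F x in at_top. theta n x * (- (ln (1 - f x / x) + ln (1 - g x / x)) / 2) = dW A x i j"
    by eventually_elim (simp add: dW_eq i j f_def g_def)
  moreover have "((\<lambda>x. theta n x * (- (ln (1 - f x / x) + ln (1 - g x / x)) / 2))
      \<longlongrightarrow> (Lones j 0 i + Lones i 0 j) / real n) at_top"
    using n_ge_2 by (intro theta_ln_bracket_tendsto f g nonneg) simp
  ultimately show ?thesis by (rule Lim_transform_eventually[rotated])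
qed

end

theorem corollary2:
  fixes n :: nat and E :: "'e set" and ends :: "'e \<Rightarrow> nat set" and w :: "'e \<Rightarrow> real"
    and i j :: nat
  assumes "n \<ge> 2"
    and "wmultigraph n E ends w"
    and "connected_graph n E ends"
    and "i < n" and "j < n" and "i \<noteq> j"
  shows "let A = wadj n E ends w; p = perron_vec A; P = diag_of_vec p;
             B = minv P * A * P
         in ((\<lambda>\<alpha>. dW A \<alpha> i j) \<longlongrightarrow>
               (row_inv_del_sum B (rho A) j i + row_inv_del_sum B (rho A) i j) / real n) at_top"
proof -
  define A where "A = wadj n E ends w"
  interpret sym_irreducible n "edge_weight E ends w"
    by (rule connected_wmultigraph_sym_irreducible[OF assms(1-3)])
  obtain p lam where "perron n (edge_weight E ends w) p lam" and p_sum: "(\<Sum>k<n. p k) = 1"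
    by (rule exists_normalized_perron_vector)
  then interpret perron_matrix n "edge_weight E ends w" p lam A
    by (intro perron_matrix.intro perron_matrix_axioms.intro) (auto simp: A_def wadj_carrier wadj_index)
  have "minv (diag_of_vec (perron_vec A)) * A * diag_of_vec (perron_vec A) = Bm"
    unfolding Bm_def Pm_def perron_vec_eq[OF p_sum] ..
  thus ?thesis
    using dW_tendsto[OF assms(4-6)] row_inv_del_sum_eq[OF assms(4-6)]
      row_inv_del_sum_eq[OF assms(5,4) assms(6)[symmetric]]
    unfolding Let_def A_def[symmetric] rho_eq by simp
qed

end
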